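(* Let $X$ be a separated locally convex space and $g\colon X\to\mathbb R^{\vartriangle}$ closed and convex (possibly improper). Then $g^{**}=g$, where $$g^{**}(x)=\sup_{(\xi,r)\in X^{\vartriangle}\times\mathbb R}\big(\xi_r(x)-^{\vartriangle}g^*(\xi,r)\big),\quad x\in X.$$
   Context: $\overline{\mathbb R}=\mathbb R\cup\{\pm\infty\}$ with usual order; inf-addition $r+^{\vartriangle}s=\inf\{a+b: a,b\in\mathbb R, r\leq a, s\leq b\}$; inf-difference $r-^{\vartriangle}s=\min\{t: r\leq s+^{\vartriangle}t\}$. $\mathbb R^{\vartriangle}$ is $\overline{\mathbb R}$ with $+^{\vartriangle}$; $g$ convex means $g(tx_1+(1-t)x_2)\leq tg(x_1)+^{\vartriangle}(1-t)g(x_2)$ for $t\in(0,1)$; closed means $\operatorname{epi}g=\{(x,r)\in X\times\mathbb R: g(x)\leq r\}$ is closed. For $x^*\in X^*$, $r\in\mathbb R$: $x^*_r(x)=x^*(x)-r$; $\hat x^*_r(x)=-\infty$ if $x^*(x)-r\leq0$, $+\infty$ otherwise; $\hat x^*=\hat x^*_0$; $X^{\vartriangle}=X^*\cup\{\hat x^*: x^*\in X^*\}$; $\xi_r=x^*_r$ if $\xi=x^*$, $\xi_r=\hat x^*_r$ if $\xi=\hat x^*$. Conjugate: $g^*(\xi,r)=\sup_{x\in X}(\xi_r(x)-^{\vartriangle}g(x))$ for $(\xi,r)\in X^{\vartriangle}\times\mathbb R$. *)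

theory Defs
  imports "HOL-Analysis.Analysis"
begin

definition inf_add :: "ereal \<Rightarrow> ereal \<Rightarrow> ereal" where
  "inf_add r s = Inf {ereal (a + b) | a b. r \<le> ereal a \<and> s \<le> ereal b}"

definition inf_diff :: "ereal \<Rightarrow> ereal \<Rightarrow> ereal" where
  "inf_diff r s = Inf {t. r \<le> inf_add s t}"

text \<open>Separated (Hausdorff, via the class t2_space) locally convex real topological vector space.\<close>
definition locally_convex_space :: "'a::{real_vector, t2_space} itself \<Rightarrow> bool" where
  "locally_convex_space _ \<longleftrightarrow>
     continuous_on UNIV (\<lambda>p::'a \<times> 'a. fst p + snd p) \<and>
     continuous_on UNIV (\<lambda>p::real \<times> 'a. fst p *\<^sub>R snd p) \<and>
     (\<forall>U::'a set. open U \<and> 0 \<in> U \<longrightarrow> (\<exists>V. open V \<and> convex V \<and> 0 \<in> V \<and> V \<subseteq> U))"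

definition topdual :: "('a::{real_vector, topological_space} \<Rightarrow> real) set" where
  "topdual = {f. linear f \<and> continuous_on UNIV f}"

text \<open>Elements of X^\<triangle>: x* or hat x*.\<close>
datatype 'a dualpt = Lin "'a \<Rightarrow> real" | Hat "'a \<Rightarrow> real"

definition Xtri :: "('a::{real_vector, topological_space}) dualpt set" where
  "Xtri = Lin ` topdual \<union> Hat ` topdual"

fun xi_r :: "'a dualpt \<Rightarrow> real \<Rightarrow> 'a \<Rightarrow> ereal" where
  "xi_r (Lin f) r x = ereal (f x - r)"
| "xi_r (Hat f) r x = (if f x - r \<le> 0 then -\<infinity> else \<infinity>)"

definition convex_tri :: "('a::real_vector \<Rightarrow> ereal) \<Rightarrow> bool" where
  "convex_tri g \<longleftrightarrow> (\<forall>x1 x2 t. 0 < t \<and> t < 1 \<longrightarrow>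
      g (t *\<^sub>R x1 + (1 - t) *\<^sub>R x2) \<le> inf_add (ereal t * g x1) (ereal (1 - t) * g x2))"

definition epi :: "('a \<Rightarrow> ereal) \<Rightarrow> ('a \<times> real) set" where
  "epi g = {(x, r). g x \<le> ereal r}"

definition closed_fun :: "('a::topological_space \<Rightarrow> ereal) \<Rightarrow> bool" where
  "closed_fun g \<longleftrightarrow> closed (epi g)"

definition conj_tri :: "('a::{real_vector, topological_space} \<Rightarrow> ereal) \<Rightarrow> 'a dualpt \<Rightarrow> real \<Rightarrow> ereal" where
  "conj_tri g \<xi> r = (SUP x. inf_diff (xi_r \<xi> r x) (g x))"

definition biconj_tri :: "('a::{real_vector, topological_space} \<Rightarrow> ereal) \<Rightarrow> 'a \<Rightarrow> ereal" where
  "biconj_tri g x = (SUP p \<in> Xtri \<times> (UNIV::real set). inf_diff (xi_r (fst p) (snd p) x) (conj_tri g (fst p) (snd p)))"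

end

theory Submission
  imports Defs
begin

(* The inequality g** <= g is the Fenchel--Young inequality.  For the converse take
   a real beta < g(x0).  Then (x0, beta) lies outside the closed convex epigraph of g in X x R,
   so a continuous linear functional (x, r) |-> f x + r c strictly separates them.
   If c < 0 we obtain a continuous affine minorant of g exceeding beta at x0, and the
   functional x* of X^tri shows g**(x0) > beta.  If c = 0 the hyperplane is vertical: f is
   bounded by gamma on the domain of g but not at x0, so g*(hat x*, gamma) = -infinity and the
   functional hat x* forces g**(x0) = +infinity.  If c > 0 the epigraph is empty, g is
   identically +infinity, and the same argument with x* = 0 applies. *)

lemma Inf_ereal_upper_bounds: "(t::ereal) < \<infinity> \<Longrightarrow> Inf {ereal c | c. t \<le> ereal c} = t"
proof (cases t)
  case (real a) then show ?thesis by (intro antisym Inf_lower Inf_greatest) auto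
next
  case MInf
  then show ?thesis by (auto intro!: ereal_bot Inf_lower)
qed auto

lemma inf_add_eq: "inf_add r s = (if r = \<infinity> \<or> s = \<infinity> then \<infinity> else r + s)"
proof (cases "r = \<infinity> \<or> s = \<infinity>")
  case True
  then have no_bounds: "{ereal (a + b) | a b. r \<le> ereal a \<and> s \<le> ereal b} = {}" by auto
  show ?thesis using True unfolding inf_add_def no_bounds Inf_empty by (simp add: top_ereal_def)
next
  case False
  have "{ereal (a + b) | a b. r \<le> ereal a \<and> s \<le> ereal b} = {ereal c | c. r + s \<le> ereal c}"
  proof (intro set_eqI iffI)
    fix z assume "z \<in> {ereal (a + b) | a b. r \<le> ereal a \<and> s \<le> ereal b}"
    then show "z \<in> {ereal c | c. r + s \<le> ereal c}"
      by (auto, metis add_mono plus_ereal.simps(1))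
  next
    fix z assume "z \<in> {ereal c | c. r + s \<le> ereal c}"
    then obtain c where "z = ereal c" "r + s \<le> ereal c" by blast
    txt \<open>Split the bound c between r and s; if s = -\<infinity> any finite bound for r will do.\<close>
    have "\<exists>b. r \<le> ereal (c - b) \<and> s \<le> ereal b"
    proof (cases s)
      case (real b)
      then show ?thesis using \<open>r + s \<le> ereal c\<close> by (intro exI[of _ b]) (cases r, auto)
    next
      case MInf
      obtain a0 where "r \<le> ereal a0" using False by (cases r) auto
      then show ?thesis using MInf by (intro exI[of _ "c - a0"]) auto
    qed (use False in simp)
    then show "z \<in> {ereal (a + b) | a b. r \<le> ereal a \<and> s \<le> ereal b}"
      using \<open>z = ereal c\<close> by force
  qed
  moreover have "r + s < \<infinity>" using False by (cases r; cases s) auto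
  ultimately show ?thesis using False by (simp add: inf_add_def Inf_ereal_upper_bounds)
qed

lemma inf_diff_eq:
  "inf_diff r s = (if s = \<infinity> then -\<infinity> else if s = -\<infinity> then (if r = -\<infinity> then -\<infinity> else \<infinity>) else r - s)"
proof (cases s)
  case (real a)
  have "r \<le> inf_add s t \<longleftrightarrow> r - s \<le> t" for t
    using real by (cases r; cases t) (auto simp: inf_add_eq)
  then have "{t. r \<le> inf_add s t} = {r - s ..}" by auto
  then show ?thesis using real by (simp add: inf_diff_def)
next
  case PInf
  then have "{t. r \<le> inf_add s t} = UNIV" by (auto simp: inf_add_eq)
  then show ?thesis using PInf by (simp add: inf_diff_def bot_ereal_def)
next
  case MInf
  show ?thesis
  proof (cases "r = -\<infinity>")
    case True
    then have "{t. r \<le> inf_add s t} = UNIV" by (auto simp: inf_add_eq)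
    then show ?thesis using True MInf by (simp add: inf_diff_def bot_ereal_def)
  next
    case False
    have "r \<le> inf_add s t \<longleftrightarrow> t = \<infinity>" for t
      using False MInf by (cases t) (auto simp: inf_add_eq)
    then have "{t. r \<le> inf_add s t} = {\<infinity>}" by auto
    then show ?thesis using False MInf by (simp add: inf_diff_def)
  qed
qed

lemma inf_diff_le_iff: "inf_diff r s \<le> t \<longleftrightarrow> r \<le> inf_add s t"
  by (cases r; cases s; cases t) (auto simp: inf_diff_eq inf_add_eq)

lemma inf_add_commute: "inf_add r s = inf_add s r"
  by (auto simp: inf_add_eq add.commute)

lemma inf_add_mono: "r \<le> r' \<Longrightarrow> s \<le> s' \<Longrightarrow> inf_add r s \<le> inf_add r' s'"
  by (cases r; cases s; cases r'; cases s') (auto simp: inf_add_eq)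

lemma inf_diff_antimono: "s \<le> s' \<Longrightarrow> inf_diff r s' \<le> inf_diff r s"
  by (cases r; cases s; cases s') (auto simp: inf_diff_eq)

text \<open>Sublinear functionals, and partial linear functionals represented by their graphs:
  a dominated graph is the graph of a linear functional on a subspace lying below p.\<close>
definition sublinear :: "('b::real_vector \<Rightarrow> real) \<Rightarrow> bool" where
  "sublinear p \<longleftrightarrow> (\<forall>x y. p (x + y) \<le> p x + p y) \<and> (\<forall>c x. 0 < c \<longrightarrow> p (c *\<^sub>R x) \<le> c * p x)"

definition functional_graph :: "('b \<times> real) set \<Rightarrow> bool" where
  "functional_graph G \<longleftrightarrow> (\<forall>x a b. (x, a) \<in> G \<longrightarrow> (x, b) \<in> G \<longrightarrow> a = b)"

definition dominated_graph :: "('b::real_vector \<Rightarrow> real) \<Rightarrow> ('b \<times> real) set \<Rightarrow> bool" where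
  "dominated_graph p G \<longleftrightarrow> subspace G \<and> functional_graph G \<and> (\<forall>(x, a) \<in> G. a \<le> p x)"

definition graph_ext :: "('b::real_vector \<times> real) set \<Rightarrow> 'b \<Rightarrow> real \<Rightarrow> ('b \<times> real) set" where
  "graph_ext G x1 a = {w + t *\<^sub>R (x1, a) | w t. w \<in> G}"

lemma subspace_adjoin:
  fixes S :: "'v::real_vector set"
  assumes "subspace S" shows "subspace {w + t *\<^sub>R v | w t. w \<in> S}"
proof -
  have "{w + t *\<^sub>R v | w t. w \<in> S} = {w + u | w u. w \<in> S \<and> u \<in> span {v}}"
    unfolding span_singleton by blast
  then show ?thesis using subspace_sums[OF assms subspace_span] by simp
qed

lemma graph_ext_mem:
  "(x, e) \<in> graph_ext G x1 a \<longleftrightarrow> (\<exists>y b t. (y, b) \<in> G \<and> x = y + t *\<^sub>R x1 \<and> e = b + t * a)"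
  by (auto simp: graph_ext_def)

text \<open>The extension is again a graph, because x1 is independent of the domain of G.\<close>
lemma functional_graph_ext:
  assumes sub: "subspace G" and fg: "functional_graph G" and x1: "x1 \<notin> fst ` G"
  shows "functional_graph (graph_ext G x1 a)"
  unfolding functional_graph_def
proof (intro allI impI)
  fix x e e'
  assume "(x, e) \<in> graph_ext G x1 a" "(x, e') \<in> graph_ext G x1 a"
  then obtain y b t y' b' t' where u: "(y, b) \<in> G" "x = y + t *\<^sub>R x1" "e = b + t * a"
    and v: "(y', b') \<in> G" "x = y' + t' *\<^sub>R x1" "e' = b' + t' * a"
    unfolding graph_ext_mem by blast
  have "t = t'"
  proof (rule ccontr)
    assume "t \<noteq> t'"
    have "(y' - y, b' - b) \<in> G" using subspace_diff[OF sub v(1) u(1)] by simp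
    then have "inverse (t - t') *\<^sub>R (y' - y, b' - b) \<in> G" by (rule subspace_scale[OF sub])
    moreover have "y' - y = (t - t') *\<^sub>R x1" using u(2) v(2) by (simp add: algebra_simps)
    ultimately have "x1 \<in> fst ` G" using \<open>t \<noteq> t'\<close> by (force simp: image_iff)
    then show False using x1 by contradiction
  qed
  moreover have "b = b'" using fg u v \<open>t = t'\<close> unfolding functional_graph_def by auto
  ultimately show "e = e'" using u(3) v(3) by simp
qed

text \<open>The extension stays below p, provided a lies between the two bounds of the classical
  Hahn--Banach step (after scaling an element of the extension to coefficient \<plusminus>1 at x1).\<close>
lemma graph_ext_dominated:
  assumes p: "sublinear p" and sub: "subspace G" and dom: "\<forall>(x, b) \<in> G. b \<le> p x"
    and lower: "\<forall>(y, b) \<in> G. b - p (y - x1) \<le> a"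
    and upper: "\<forall>(z, e) \<in> G. a \<le> p (z + x1) - e"
    and ext: "(x, e) \<in> graph_ext G x1 a"
  shows "e \<le> p x"
proof -
  obtain y b t where G: "(y, b) \<in> G" and x: "x = y + t *\<^sub>R x1" and e: "e = b + t * a"
    using ext unfolding graph_ext_mem by blast
  have scaled: "(c *\<^sub>R y, c * b) \<in> G" for c using subspace_scale[OF sub G, of c] by simp
  have hom: "p (c *\<^sub>R v) \<le> c * p v" if "c > 0" for c v using p that by (simp add: sublinear_def)
  consider "t = 0" | "t > 0" | "t < 0" by linarith
  then show ?thesis
  proof cases
    case 1 then show ?thesis using G dom x e by auto
  next
    case 2
    have "a \<le> p (inverse t *\<^sub>R y + x1) - inverse t * b" using upper scaled[of "inverse t"] by auto
    moreover have "inverse t *\<^sub>R x = inverse t *\<^sub>R y + x1" using 2 by (simp add: x algebra_simps)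
    then have "p (inverse t *\<^sub>R y + x1) \<le> inverse t * p x" using hom[of "inverse t" x] 2 by simp
    ultimately show ?thesis using 2 by (simp add: e field_simps)
  next
    case 3
    have "- inverse t * b - p (- inverse t *\<^sub>R y - x1) \<le> a" using lower scaled[of "- inverse t"] by auto
    moreover have "(- inverse t) *\<^sub>R x = - inverse t *\<^sub>R y - x1" using 3 by (simp add: x algebra_simps)
    then have "p (- inverse t *\<^sub>R y - x1) \<le> - inverse t * p x" using hom[of "- inverse t" x] 3 by simp
    ultimately show ?thesis using 3 by (simp add: e field_simps)
  qed
qed

text \<open>An admissible value a exists: every lower bound is below every upper bound by subadditivity.\<close>
lemma extension_value_exists:
  assumes p: "sublinear p" and G: "dominated_graph p G"
  obtains a where "\<forall>(y, b) \<in> G. b - p (y - x1) \<le> a" and "\<forall>(z, e) \<in> G. a \<le> p (z + x1) - e"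
proof -
  have sub: "subspace G" and dom: "\<And>x b. (x, b) \<in> G \<Longrightarrow> b \<le> p x"
    using G by (auto simp: dominated_graph_def)
  have bound: "b - p (y - x1) \<le> p (z + x1) - e" if "(y, b) \<in> G" "(z, e) \<in> G" for y b z e
  proof -
    have "b + e \<le> p (y + z)" using dom subspace_add[OF sub that] by simp
    also have "\<dots> = p ((y - x1) + (z + x1))" by (simp add: algebra_simps)
    also have "\<dots> \<le> p (y - x1) + p (z + x1)" using p unfolding sublinear_def by blast
    finally show ?thesis by simp
  qed
  define S where "S = {b - p (y - x1) | y b. (y, b) \<in> G}"
  have G0: "(0, 0) \<in> G" using subspace_0[OF sub] by (simp add: zero_prod_def)
  then have "S \<noteq> {}" by (auto simp: S_def)
  moreover have "bdd_above S" unfolding bdd_above_def S_def using bound[OF _ G0] by auto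
  ultimately show ?thesis
    by (intro that[of "Sup S"]) (auto simp: S_def intro!: cSup_upper cSup_least bound)
qed

lemma dominated_graph_extend:
  assumes p: "sublinear p" and G: "dominated_graph p G" and x1: "x1 \<notin> fst ` G"
  shows "\<exists>G'. G \<subset> G' \<and> dominated_graph p G'"
proof -
  obtain a where lower: "\<forall>(y, b) \<in> G. b - p (y - x1) \<le> a" and upper: "\<forall>(z, e) \<in> G. a \<le> p (z + x1) - e"
    using extension_value_exists[OF p G] .
  have sub: "subspace G" and fg: "functional_graph G" and dom: "\<forall>(x, b) \<in> G. b \<le> p x"
    using G by (auto simp: dominated_graph_def)
  have "G \<subseteq> graph_ext G x1 a" by (force simp: graph_ext_def)
  moreover have "(x1, a) \<in> graph_ext G x1 a"
    using subspace_0[OF sub] unfolding graph_ext_def by (intro CollectI exI[of _ 0] exI[of _ 1]) simp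
  moreover have "dominated_graph p (graph_ext G x1 a)"
    using subspace_adjoin[OF sub] functional_graph_ext[OF sub fg x1]
      graph_ext_dominated[OF p sub dom lower upper]
    by (auto simp: dominated_graph_def graph_ext_def)
  ultimately show ?thesis using x1 by (metis fst_conv image_eqI psubsetI)
qed

lemma dominated_graph_chain_Union:
  assumes "C \<noteq> {}" and CA: "\<forall>G\<in>C. dominated_graph p G" and ch: "\<And>X Y. X \<in> C \<Longrightarrow> Y \<in> C \<Longrightarrow> X \<subseteq> Y \<or> Y \<subseteq> X"
  shows "dominated_graph p (\<Union>C)"
proof -
  have two: "\<exists>Z\<in>C. u \<in> Z \<and> v \<in> Z" if "u \<in> \<Union>C" "v \<in> \<Union>C" for u v
    using that ch by blast
  have "subspace (\<Union>C)"
  proof (rule subspaceI)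
    show "0 \<in> \<Union>C" using \<open>C \<noteq> {}\<close> CA subspace_0 by (force simp: dominated_graph_def)
  next
    fix u v assume "u \<in> \<Union>C" "v \<in> \<Union>C"
    then obtain Z where "Z \<in> C" "u \<in> Z" "v \<in> Z" using two by blast
    then show "u + v \<in> \<Union>C" using CA subspace_add by (force simp: dominated_graph_def)
  next
    fix c u assume "u \<in> \<Union>C"
    then show "c *\<^sub>R u \<in> \<Union>C" using CA subspace_scale by (force simp: dominated_graph_def)
  qed
  moreover have "functional_graph (\<Union>C)"
    unfolding functional_graph_def
  proof (intro allI impI)
    fix x a b assume "(x, a) \<in> \<Union>C" "(x, b) \<in> \<Union>C"
    then obtain Z where "Z \<in> C" "(x, a) \<in> Z" "(x, b) \<in> Z" using two by blast
    then show "a = b" using CA by (auto simp: dominated_graph_def functional_graph_def)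
  qed
  ultimately show ?thesis using CA by (auto simp: dominated_graph_def)
qed

theorem hahn_banach:
  assumes p: "sublinear p" and G0: "dominated_graph p G0"
  obtains f where "linear f" "\<And>x. f x \<le> p x" "\<And>x a. (x, a) \<in> G0 \<Longrightarrow> f x = a"
proof -
  define A where "A = {G. G0 \<subseteq> G \<and> dominated_graph p G}"
  have "\<exists>M\<in>A. \<forall>X\<in>A. M \<subseteq> X \<longrightarrow> X = M"
  proof (rule subset_Zorn_nonempty)
    show "A \<noteq> {}" using G0 by (auto simp: A_def)
  next
    fix C assume "C \<noteq> {}" "subset.chain A C"
    then show "\<Union>C \<in> A"
      using dominated_graph_chain_Union[of C p] by (auto simp: A_def subset_chain_def)
  qed
  then obtain M where MA: "M \<in> A" and max: "\<And>X. X \<in> A \<Longrightarrow> M \<subseteq> X \<Longrightarrow> X = M"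
    by blast
  have M: "dominated_graph p M" and M0: "G0 \<subseteq> M" using MA by (auto simp: A_def)
  have total: "\<exists>a. (x, a) \<in> M" for x
  proof (rule ccontr)
    assume "\<nexists>a. (x, a) \<in> M"
    then have "x \<notin> fst ` M" by force
    then obtain G' where "M \<subset> G'" "dominated_graph p G'" using dominated_graph_extend[OF p M] by blast
    then show False using max[of G'] M0 by (auto simp: A_def)
  qed
  have fg: "functional_graph M" and Msub: "subspace M" and Mdom: "\<forall>(x, a) \<in> M. a \<le> p x"
    using M by (auto simp: dominated_graph_def)
  define f where "f x = (THE a. (x, a) \<in> M)" for x
  have fM: "(x, a) \<in> M \<longleftrightarrow> a = f x" for x a
    using total[of x] fg unfolding f_def functional_graph_def by (metis theI)
  have "linear f"
  proof (rule linearI)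
    show "f (x + y) = f x + f y" for x y
      using subspace_add[OF Msub, of "(x, f x)" "(y, f y)"] fM by simp
    show "f (c *\<^sub>R x) = c *\<^sub>R f x" for c x
      using subspace_scale[OF Msub, of "(x, f x)" c] fM by simp
  qed
  moreover have "f x \<le> p x" for x using Mdom fM[of x "f x"] by auto
  moreover have "f x = a" if "(x, a) \<in> G0" for x a using M0 that fM by auto
  ultimately show ?thesis by (rule that)
qed

context
  fixes X :: "'b::{real_vector, t2_space} itself"
  assumes lcs: "locally_convex_space X"
begin

lemma lcs_add: "continuous_on UNIV (\<lambda>p::'b \<times> 'b. fst p + snd p)"
  and lcs_scale: "continuous_on UNIV (\<lambda>p::real \<times> 'b. fst p *\<^sub>R snd p)"
  and lcs_convex_nbhd: "\<And>U::'b set. open U \<Longrightarrow> 0 \<in> U \<Longrightarrow> \<exists>V. open V \<and> convex V \<and> 0 \<in> V \<and> V \<subseteq> U"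
  using lcs unfolding locally_convex_space_def by blast+

lemma continuous_affine: "continuous_on UNIV (\<lambda>x::'b. a + c *\<^sub>R x)"
proof -
  have "continuous_on UNIV (\<lambda>x::'b. (\<lambda>p. fst p *\<^sub>R snd p) (c, x))"
    by (rule continuous_on_compose2[OF lcs_scale]) (auto intro!: continuous_intros)
  then have "continuous_on UNIV (\<lambda>x::'b. (\<lambda>p. fst p + snd p) (a, c *\<^sub>R x))"
    by (intro continuous_on_compose2[OF lcs_add]) (auto intro!: continuous_intros)
  then show ?thesis by simp
qed

lemma open_affine_image:
  assumes "open (S::'b set)" "c \<noteq> 0"
  shows "open ((\<lambda>x. a + c *\<^sub>R x) ` S)"
proof -
  have "(\<lambda>x. a + c *\<^sub>R x) ` S = (\<lambda>y. (- inverse c *\<^sub>R a) + inverse c *\<^sub>R y) -` S"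
    using assms(2) by (force simp: image_iff algebra_simps)
  then show ?thesis using open_vimage[OF assms(1) continuous_affine[of "- inverse c *\<^sub>R a" "inverse c"]]
    by (simp only:)
qed

lemma open_line_nbhd:
  assumes "open (U::'b set)" "t0 *\<^sub>R x \<in> U"
  obtains \<delta> where "\<delta> > 0" "\<And>t. \<bar>t - t0\<bar> < \<delta> \<Longrightarrow> t *\<^sub>R x \<in> U"
proof -
  have "continuous_on UNIV (\<lambda>t::real. (\<lambda>p. fst p *\<^sub>R snd p) (t, x))"
    by (intro continuous_on_compose2[OF lcs_scale]) (auto intro!: continuous_intros)
  then have "open ((\<lambda>t. t *\<^sub>R x) -` U)" using open_vimage[OF assms(1)] by simp
  moreover have "t0 \<in> (\<lambda>t. t *\<^sub>R x) -` U" using assms(2) by simp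
  ultimately obtain \<delta> where "\<delta> > 0" "ball t0 \<delta> \<subseteq> (\<lambda>t. t *\<^sub>R x) -` U"
    using open_contains_ball by blast
  then show ?thesis by (intro that[of \<delta>]) (auto simp: subset_eq dist_real_def abs_minus_commute)
qed

lemma linear_continuous_if_bounded_on_nbhd:
  fixes f :: "'b \<Rightarrow> real"
  assumes f: "linear f" and N: "open N" "0 \<in> N" and bound: "\<And>x. x \<in> N \<Longrightarrow> f x < 1"
  shows "continuous_on UNIV f"
  unfolding continuous_on_open_vimage[OF open_UNIV]
proof (intro allI impI)
  define M where "M = N \<inter> (\<lambda>x. 0 + (-1) *\<^sub>R x) -` N"
  have M: "open M" "0 \<in> M" using N open_vimage[OF N(1) continuous_affine[of 0 "-1"]] by (auto simp: M_def)
  have abs_less: "\<bar>f m\<bar> < 1" if "m \<in> M" for m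
    using that bound[of m] bound[of "- m"] linear_neg[OF f, of m] by (auto simp: M_def)
  fix B :: "real set" assume B: "open B"
  show "open (f -` B \<inter> UNIV)"
    unfolding open_subopen[of "f -` B \<inter> UNIV"]
  proof
    fix x assume "x \<in> f -` B \<inter> UNIV"
    then obtain e where e: "e > 0" "ball (f x) e \<subseteq> B" using B open_contains_ball by blast
    define T where "T = (\<lambda>y. x + e *\<^sub>R y) ` M"
    have "open T" unfolding T_def using e(1) by (intro open_affine_image M) auto
    moreover have "x \<in> T" unfolding T_def using M(2) by (auto intro!: image_eqI[of x _ 0])
    moreover have "T \<subseteq> f -` B \<inter> UNIV"
    proof
      fix w assume "w \<in> T"
      then obtain m where m: "m \<in> M" "w = x + e *\<^sub>R m" unfolding T_def by blast
      have "f w = f x + e * f m" using m(2) f by (simp add: linear_add linear_scale)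
      moreover have "\<bar>e * f m\<bar> < e" using abs_less[OF m(1)] e(1) by (simp add: abs_mult)
      ultimately show "w \<in> f -` B \<inter> UNIV" using e(2) by (auto simp: dist_real_def)
    qed
    ultimately show "\<exists>T. open T \<and> x \<in> T \<and> T \<subseteq> f -` B \<inter> UNIV" by blast
  qed
qed

end

definition mink :: "'b::real_vector set \<Rightarrow> 'b \<Rightarrow> real" where
  "mink D x = Inf {t. 0 < t \<and> inverse t *\<^sub>R x \<in> D}"

context
  fixes D :: "'b::{real_vector, t2_space} set"
  assumes lcs: "locally_convex_space TYPE('b)" and D: "open D" "convex D" "0 \<in> D"
begin

text \<open>An open neighbourhood of 0 is absorbing, so the gauge is a finite infimum.\<close>
lemma mink_set_nonempty: "{t. 0 < t \<and> inverse t *\<^sub>R x \<in> D} \<noteq> {}"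
proof -
  obtain \<delta> where "\<delta> > 0" "\<And>t. \<bar>t\<bar> < \<delta> \<Longrightarrow> t *\<^sub>R x \<in> D"
    using open_line_nbhd[OF lcs D(1), of 0 x] D(3) by auto
  then have "0 < 2 / \<delta> \<and> inverse (2 / \<delta>) *\<^sub>R x \<in> D" by simp
  then show ?thesis by blast
qed

lemma mink_le: "0 < t \<Longrightarrow> inverse t *\<^sub>R x \<in> D \<Longrightarrow> mink D x \<le> t"
  unfolding mink_def by (rule cInf_lower) (auto intro: bdd_belowI[of _ 0])

lemma mink_greatest: "(\<And>t. 0 < t \<Longrightarrow> inverse t *\<^sub>R x \<in> D \<Longrightarrow> b \<le> t) \<Longrightarrow> b \<le> mink D x"
  unfolding mink_def by (rule cInf_greatest[OF mink_set_nonempty]) blast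

lemma mink_nonneg: "0 \<le> mink D x"
  by (rule mink_greatest) simp

lemma sublinear_mink: "sublinear (mink D)"
  unfolding sublinear_def
proof (intro conjI allI impI)
  fix x y
  have sum_le: "mink D (x + y) \<le> t + s"
    if t: "0 < t" "inverse t *\<^sub>R x \<in> D" and s: "0 < s" "inverse s *\<^sub>R y \<in> D" for t s
  proof (rule mink_le)
    show "0 < t + s" using t s by simp
    have "(t / (t + s)) *\<^sub>R (inverse t *\<^sub>R x) + (s / (t + s)) *\<^sub>R (inverse s *\<^sub>R y) \<in> D"
      using t s by (intro convexD[OF D(2)]) (auto simp: add_divide_distrib[symmetric])
    moreover have "(t / (t + s)) *\<^sub>R (inverse t *\<^sub>R x) + (s / (t + s)) *\<^sub>R (inverse s *\<^sub>R y)
        = inverse (t + s) *\<^sub>R (x + y)"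
    proof -
      have "t / (t + s) * inverse t = inverse (t + s)" "s / (t + s) * inverse s = inverse (t + s)"
        using t s by (simp_all add: field_simps)
      then show ?thesis by (simp add: scaleR_add_right)
    qed
    ultimately show "inverse (t + s) *\<^sub>R (x + y) \<in> D" by simp
  qed
  have "mink D (x + y) - mink D y \<le> mink D x"
  proof (rule mink_greatest)
    fix t assume "0 < t" "inverse t *\<^sub>R x \<in> D"
    then have "mink D (x + y) - t \<le> mink D y" using sum_le by (intro mink_greatest) force
    then show "mink D (x + y) - mink D y \<le> t" by simp
  qed
  then show "mink D (x + y) \<le> mink D x + mink D y" by simp
next
  fix c :: real and x :: 'b assume c: "0 < c"
  have "mink D (c *\<^sub>R x) / c \<le> mink D x"
  proof (rule mink_greatest)
    fix t assume t: "0 < t" "inverse t *\<^sub>R x \<in> D"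
    have "mink D (c *\<^sub>R x) \<le> c * t"
      using c t by (intro mink_le) (auto simp: field_simps)
    then show "mink D (c *\<^sub>R x) / c \<le> t" using c by (simp add: field_simps)
  qed
  then show "mink D (c *\<^sub>R x) \<le> c * mink D x" using c by (simp add: field_simps)
qed

text \<open>Since D is open, its points have gauge < 1; since D is convex and contains 0,
  points outside D have gauge \<ge> 1.\<close>
lemma mink_less_one: "x \<in> D \<Longrightarrow> mink D x < 1"
proof -
  assume "x \<in> D"
  then obtain \<delta> where d: "\<delta> > 0" "\<And>t. \<bar>t - 1\<bar> < \<delta> \<Longrightarrow> t *\<^sub>R x \<in> D"
    using open_line_nbhd[OF lcs D(1), of 1 x] by auto
  define e where "e = min (\<delta> / 2) 1"
  have e: "0 < e" "e < \<delta>" using d(1) by (auto simp: e_def)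
  then have "mink D x \<le> inverse (1 + e)" using d(2)[of "1 + e"] by (intro mink_le) auto
  also have "\<dots> < 1" using e by (simp add: field_simps)
  finally show ?thesis .
qed

lemma mink_ge_one: "x \<notin> D \<Longrightarrow> 1 \<le> mink D x"
proof (rule mink_greatest, rule ccontr)
  fix t assume "x \<notin> D" "0 < t" "inverse t *\<^sub>R x \<in> D" "\<not> 1 \<le> t"
  then have "t *\<^sub>R (inverse t *\<^sub>R x) + (1 - t) *\<^sub>R 0 \<in> D"
    by (intro convexD[OF D(2)] D(3)) auto
  then show False using \<open>x \<notin> D\<close> \<open>0 < t\<close> by simp
qed

lemma separating_functional_open_convex:
  assumes z0: "z0 \<notin> D"
  obtains f where "f \<in> topdual" "f z0 = 1" "\<And>x. x \<in> D \<Longrightarrow> f x < 1"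
proof -
  define G0 where "G0 = range (\<lambda>t. t *\<^sub>R (z0, 1::real))"
  have "z0 \<noteq> 0" using z0 D(3) by auto
  have "subspace G0" unfolding G0_def using subspace_span[of "{(z0, 1::real)}"] by (simp add: span_singleton)
  moreover have "functional_graph G0" using \<open>z0 \<noteq> 0\<close> by (auto simp: G0_def functional_graph_def)
  moreover have "a \<le> mink D x" if "(x, a) \<in> G0" for x a
  proof (cases "a > 0")
    case True
    have "x = a *\<^sub>R z0" using that by (auto simp: G0_def)
    then have "mink D z0 \<le> inverse a * mink D x"
      using sublinear_mink True unfolding sublinear_def
      by (metis inverse_positive_iff_positive scaleR_scaleR left_inverse less_irrefl scaleR_one)
    then have "a * mink D z0 \<le> mink D x" using True by (simp add: field_simps)
    moreover have "a \<le> a * mink D z0" using mult_left_mono[of 1 "mink D z0" a] mink_ge_one[OF z0] True by simp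
    ultimately show ?thesis by linarith
  qed (use mink_nonneg[of x] in linarith)
  ultimately have "dominated_graph (mink D) G0" by (auto simp: dominated_graph_def)
  then obtain f where f: "linear f" "\<And>x. f x \<le> mink D x" "\<And>x a. (x, a) \<in> G0 \<Longrightarrow> f x = a"
    using hahn_banach[OF sublinear_mink] by blast
  have less: "f x < 1" if "x \<in> D" for x using f(2)[of x] mink_less_one[OF that] by simp
  have "continuous_on UNIV f" by (rule linear_continuous_if_bounded_on_nbhd[OF lcs f(1) D(1,3) less])
  moreover have "f z0 = 1" using f(3)[of z0 1] unfolding G0_def by (metis rangeI scaleR_one)
  ultimately show ?thesis using f(1) less by (intro that[of f]) (auto simp: topdual_def)
qed

end

theorem separation_closed_convex:
  fixes C :: "'b::{real_vector, t2_space} set"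
  assumes lcs: "locally_convex_space TYPE('b)" and C: "closed C" "convex C" and p: "p \<notin> C"
  obtains f \<gamma> where "f \<in> topdual" "\<And>c. c \<in> C \<Longrightarrow> f c \<le> \<gamma>" "\<gamma> < f p"
proof (cases "C = {}")
  case True
  then show ?thesis by (intro that[of "\<lambda>x. 0" "-1"]) (auto simp: topdual_def linear_zero)
next
  case False
  then obtain c0 where c0: "c0 \<in> C" by blast
  txt \<open>An open convex neighbourhood V of 0 with p - V disjoint from C.\<close>
  have "open ((\<lambda>x. p + (-1) *\<^sub>R x) -` (- C))"
    using C(1) by (intro open_vimage continuous_affine[OF lcs]) auto
  moreover have "0 \<in> (\<lambda>x. p + (-1) *\<^sub>R x) -` (- C)" using p by simp
  ultimately obtain V where V: "open V" "convex V" "0 \<in> V"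
    and V_sub: "V \<subseteq> (\<lambda>x. p + (-1) *\<^sub>R x) -` (- C)"
    using lcs_convex_nbhd[OF lcs] by blast
  then have missV: "p - v \<notin> C" if "v \<in> V" for v using that by auto
  txt \<open>D = (C - c0) + V is an open convex neighbourhood of 0 not containing p - c0.\<close>
  define D where "D = (\<Union>c\<in>C. (\<lambda>v. (c - c0) + 1 *\<^sub>R v) ` V)"
  have D_eq: "D = (\<Union>c\<in>(\<lambda>c. c - c0) ` C. \<Union>v\<in>V. {c + v})" by (auto simp: D_def)
  have "open D" unfolding D_def by (intro open_UN ballI open_affine_image[OF lcs V(1)]) simp
  moreover have "convex D" unfolding D_eq using C(2) V(2) by (intro convex_sums convex_translation_subtract)
  moreover have "0 \<in> D" using c0 V(3) by (force simp: D_def)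
  moreover have "p - c0 \<notin> D" using missV by (force simp: D_def)
  ultimately obtain f where f: "f \<in> topdual" "f (p - c0) = 1" and less: "\<And>x. x \<in> D \<Longrightarrow> f x < 1"
    using separating_functional_open_convex[OF lcs] by blast
  have lin: "linear f" using f(1) by (simp add: topdual_def)
  txt \<open>Pushing C slightly towards p stays inside D, which gives a strict gap.\<close>
  obtain \<delta> where \<delta>: "\<delta> > 0" "\<And>t. \<bar>t\<bar> < \<delta> \<Longrightarrow> t *\<^sub>R (p - c0) \<in> V"
    using open_line_nbhd[OF lcs V(1), of 0 "p - c0"] V(3) by auto
  have "f c \<le> f p - \<delta> / 2" if "c \<in> C" for c
  proof -
    have "(\<delta> / 2) *\<^sub>R (p - c0) \<in> V" using \<delta> by simp
    then have "(c - c0) + 1 *\<^sub>R ((\<delta> / 2) *\<^sub>R (p - c0)) \<in> D" unfolding D_def using that by blast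
    then have "f (c - c0) + \<delta> / 2 < 1" using less[of "(c - c0) + 1 *\<^sub>R ((\<delta> / 2) *\<^sub>R (p - c0))"] f(2) lin
      by (simp add: linear_add linear_scale)
    then show ?thesis using f(2) lin by (simp add: linear_diff)
  qed
  then show ?thesis using f(1) \<delta>(1) by (intro that[of f "f p - \<delta> / 2"]) auto
qed

lemma lcs_prod:
  assumes lcs: "locally_convex_space TYPE('a::{real_vector, t2_space})"
  shows "locally_convex_space TYPE('a \<times> real)"
  unfolding locally_convex_space_def
proof (intro conjI allI impI)
  have add_eq: "(\<lambda>p::('a \<times> real) \<times> ('a \<times> real). fst p + snd p) =
    (\<lambda>p. ((\<lambda>q::'a \<times> 'a. fst q + snd q) (fst (fst p), fst (snd p)), snd (fst p) + snd (snd p)))"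
    by (auto simp: fun_eq_iff)
  show "continuous_on UNIV (\<lambda>p::('a \<times> real) \<times> ('a \<times> real). fst p + snd p)"
    unfolding add_eq
    by (intro continuous_on_Pair continuous_on_compose2[OF lcs_add[OF lcs]]) (auto intro!: continuous_intros)
  have scale_eq: "(\<lambda>p::real \<times> ('a \<times> real). fst p *\<^sub>R snd p) =
    (\<lambda>p. ((\<lambda>q::real \<times> 'a. fst q *\<^sub>R snd q) (fst p, fst (snd p)), fst p * snd (snd p)))"
    by (auto simp: fun_eq_iff)
  show "continuous_on UNIV (\<lambda>p::real \<times> ('a \<times> real). fst p *\<^sub>R snd p)"
    unfolding scale_eq
    by (intro continuous_on_Pair continuous_on_compose2[OF lcs_scale[OF lcs]]) (auto intro!: continuous_intros)
next
  fix U :: "('a \<times> real) set"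
  assume "open U \<and> 0 \<in> U"
  then obtain A B where AB: "open A" "open B" "(0::'a, 0::real) \<in> A \<times> B" "A \<times> B \<subseteq> U"
    by (metis open_prod_elim zero_prod_def)
  obtain V where V: "open V" "convex V" "0 \<in> V" "V \<subseteq> A" using lcs_convex_nbhd[OF lcs AB(1)] AB(3) by auto
  obtain e where e: "e > 0" "ball (0::real) e \<subseteq> B" using AB(2,3) open_contains_ball by force
  show "\<exists>W. open W \<and> convex W \<and> 0 \<in> W \<and> W \<subseteq> U"
  proof (intro exI[of _ "V \<times> ball (0::real) e"] conjI)
    show "open (V \<times> ball (0::real) e)" using V(1) by (intro open_Times) auto
    show "convex (V \<times> ball (0::real) e)" using V(2) by (intro convex_Times convex_ball)
    show "0 \<in> V \<times> ball (0::real) e" using V(3) e(1) by (simp add: zero_prod_def)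
    show "V \<times> ball (0::real) e \<subseteq> U" using V(4) e(2) AB(4) by auto
  qed
qed

lemma topdual_prod_split:
  fixes F :: "'a::{real_vector, topological_space} \<times> real \<Rightarrow> real"
  assumes F: "F \<in> topdual"
  shows "(\<lambda>x. F (x, 0)) \<in> topdual" and "F (x, r) = F (x, 0) + r * F (0, 1)"
proof -
  have lin: "linear F" and cont: "continuous_on UNIV F" using F by (auto simp: topdual_def)
  have "linear (\<lambda>x. F (x, 0))"
  proof (rule linearI)
    show "F (x + y, 0) = F (x, 0) + F (y, 0)" for x y
      using linear_add[OF lin, of "(x, 0)" "(y, 0)"] by simp
    show "F (c *\<^sub>R x, 0) = c *\<^sub>R F (x, 0)" for c x
      using linear_scale[OF lin, of c "(x, 0)"] by simp
  qed
  moreover have "continuous_on UNIV (\<lambda>x. F (x, 0))"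
    by (intro continuous_on_compose2[OF cont]) (auto intro!: continuous_intros)
  ultimately show "(\<lambda>x. F (x, 0)) \<in> topdual" by (simp add: topdual_def)
  have "F ((x, 0) + r *\<^sub>R (0, 1)) = F (x, 0) + r * F (0, 1)"
    using linear_add[OF lin] linear_scale[OF lin] by (simp only: real_scaleR_def)
  then show "F (x, r) = F (x, 0) + r * F (0, 1)" by simp
qed

lemma topdual_scale: "f \<in> topdual \<Longrightarrow> (\<lambda>x. c * f x) \<in> topdual"
  unfolding topdual_def by (auto intro!: continuous_intros simp: linear_iff algebra_simps)

text \<open>The Fenchel--Young inequality \<xi>_r(x) \<le> g(x) +\<triangle> g*(\<xi>, r) gives g** \<le> g.\<close>
lemma biconj_tri_le: "biconj_tri g x \<le> g x"
  unfolding biconj_tri_def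
proof (rule SUP_least)
  fix p :: "'a dualpt \<times> real"
  obtain \<xi> r where p: "p = (\<xi>, r)" by fastforce
  have "inf_diff (xi_r \<xi> r x) (g x) \<le> conj_tri g \<xi> r"
    unfolding conj_tri_def by (rule SUP_upper) simp
  then have "xi_r \<xi> r x \<le> inf_add (conj_tri g \<xi> r) (g x)"
    by (simp add: inf_diff_le_iff inf_add_commute)
  then show "inf_diff (xi_r (fst p) (snd p) x) (conj_tri g (fst p) (snd p)) \<le> g x"
    using p by (simp add: inf_diff_le_iff)
qed

text \<open>A continuous affine minorant x* - \<gamma> of g stays below g**: here g*(x*, \<gamma>) \<le> 0.\<close>
lemma affine_minorant_le_biconj_tri:
  assumes f: "f \<in> topdual" and minorant: "\<And>x. ereal (f x - \<gamma>) \<le> g x"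
  shows "ereal (f x0 - \<gamma>) \<le> biconj_tri g x0"
proof -
  have conj: "conj_tri g (Lin f) \<gamma> \<le> 0"
    unfolding conj_tri_def
  proof (rule SUP_least)
    fix x
    have "ereal (f x - \<gamma>) \<le> inf_add (g x) 0" using minorant[of x] by (simp add: inf_add_eq)
    then show "inf_diff (xi_r (Lin f) \<gamma> x) (g x) \<le> 0" by (simp add: inf_diff_le_iff)
  qed
  have "ereal (f x0 - \<gamma>) = inf_diff (ereal (f x0 - \<gamma>)) 0" by (simp add: inf_diff_eq)
  also have "\<dots> \<le> inf_diff (xi_r (Lin f) \<gamma> x0) (conj_tri g (Lin f) \<gamma>)"
    using conj by (simp add: inf_diff_antimono)
  also have "\<dots> \<le> biconj_tri g x0"
    unfolding biconj_tri_def using f by (intro SUP_upper2[of "(Lin f, \<gamma>)"]) (auto simp: Xtri_def)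
  finally show ?thesis .
qed

text \<open>If a continuous x* is \<le> \<gamma> on the effective domain of g but x*(x0) > \<gamma>, then
  g*(hat x*, \<gamma>) = -\<infinity>, and the hat functional forces g**(x0) = \<infinity>.\<close>
lemma biconj_tri_infinite:
  assumes f: "f \<in> topdual" and dom: "\<And>x. g x < \<infinity> \<Longrightarrow> f x \<le> \<gamma>" and x0: "\<gamma> < f x0"
  shows "biconj_tri g x0 = \<infinity>"
proof -
  have "inf_diff (xi_r (Hat f) \<gamma> x) (g x) = -\<infinity>" for x
    using dom[of x] by (cases "g x") (auto simp: inf_diff_eq)
  then have conj: "conj_tri g (Hat f) \<gamma> = -\<infinity>" by (simp add: conj_tri_def)
  have "\<infinity> = inf_diff (xi_r (Hat f) \<gamma> x0) (conj_tri g (Hat f) \<gamma>)"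
    using x0 conj by (simp add: inf_diff_eq)
  also have "\<dots> \<le> biconj_tri g x0"
    unfolding biconj_tri_def using f by (intro SUP_upper2[of "(Hat f, \<gamma>)"]) (auto simp: Xtri_def)
  finally show ?thesis by (simp add: top_unique[where 'a=ereal, unfolded top_ereal_def])
qed

lemma convex_epi:
  assumes "convex_tri g" shows "convex (epi g)"
proof (rule convexI)
  fix p q :: "'a \<times> real" and u v :: real
  assume p: "p \<in> epi g" and q: "q \<in> epi g" and uv: "0 \<le> u" "0 \<le> v" "u + v = 1"
  obtain x1 r1 x2 r2 where pq: "p = (x1, r1)" "q = (x2, r2)" by fastforce
  have g1: "g x1 \<le> ereal r1" and g2: "g x2 \<le> ereal r2" using p q pq by (auto simp: epi_def)
  have "g (u *\<^sub>R x1 + v *\<^sub>R x2) \<le> ereal (u * r1 + v * r2)"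
  proof (cases "u = 0 \<or> u = 1")
    case True
    then show ?thesis using uv g1 g2 by auto
  next
    case False
    then have u: "0 < u" "u < 1" and v: "v = 1 - u" using uv by auto
    have "g (u *\<^sub>R x1 + v *\<^sub>R x2) \<le> inf_add (ereal u * g x1) (ereal (1 - u) * g x2)"
      using assms u v unfolding convex_tri_def by blast
    also have "\<dots> \<le> inf_add (ereal u * ereal r1) (ereal (1 - u) * ereal r2)"
      using u g1 g2 by (intro inf_add_mono ereal_mult_left_mono) auto
    also have "\<dots> = ereal (u * r1 + v * r2)" using v by (simp add: inf_add_eq)
    finally show ?thesis .
  qed
  then show "u *\<^sub>R p + v *\<^sub>R q \<in> epi g" using pq by (simp add: epi_def)
qed

lemma epigraph_separation:
  fixes g :: "'a::{real_vector, t2_space} \<Rightarrow> ereal"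
  assumes lcs: "locally_convex_space TYPE('a)" and closed: "closed_fun g" and convex: "convex_tri g"
    and below: "ereal \<beta> < g x0"
  obtains f c \<gamma> where "f \<in> topdual" "\<And>x r. g x \<le> ereal r \<Longrightarrow> f x + r * c \<le> \<gamma>"
    and "\<gamma> < f x0 + \<beta> * c"
proof -
  have "(x0, \<beta>) \<notin> epi g" using below by (simp add: epi_def not_le)
  then obtain F \<gamma> where F: "F \<in> topdual" and le: "\<And>q. q \<in> epi g \<Longrightarrow> F q \<le> \<gamma>" and gt: "\<gamma> < F (x0, \<beta>)"
    using separation_closed_convex[OF lcs_prod[OF lcs] closed[unfolded closed_fun_def] convex_epi[OF convex]]
    by blast
  show ?thesis
  proof (rule that[OF topdual_prod_split(1)[OF F]])
    show "F (x, 0) + r * F (0, 1) \<le> \<gamma>" if "g x \<le> ereal r" for x r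
      using le[of "(x, r)"] that topdual_prod_split(2)[OF F, of x r] by (simp add: epi_def)
    show "\<gamma> < F (x0, 0) + \<beta> * F (0, 1)" using gt topdual_prod_split(2)[OF F, of x0 \<beta>] by simp
  qed
qed

lemma epigraph_under_upward_hyperplane:
  assumes sep: "\<And>x r. g x \<le> ereal r \<Longrightarrow> f x + r * c \<le> \<gamma>" and c: "c > 0"
  shows "g x = \<infinity>"
proof (rule ccontr)
  assume "g x \<noteq> \<infinity>"
  then obtain r1 where r1: "g x \<le> ereal r1" by (cases "g x") auto
  define r where "r = max r1 ((\<gamma> - f x) / c + 1)"
  have "g x \<le> ereal r" using r1 by (rule order_trans) (simp add: r_def)
  then have "f x + r * c \<le> \<gamma>" by (rule sep)
  moreover have "((\<gamma> - f x) / c + 1) * c \<le> r * c" using c by (intro mult_right_mono) (auto simp: r_def)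
  moreover have "((\<gamma> - f x) / c + 1) * c = \<gamma> - f x + c" using c by (simp add: field_simps)
  ultimately show False using c by linarith
qed

text \<open>The heart of the theorem: every real \<beta> < g(x0) is below g**(x0).  Vertical separating
  hyperplanes are handled by the hat functionals, non-vertical ones by affine minorants.\<close>
lemma biconj_tri_above_real:
  fixes g :: "'a::{real_vector, t2_space} \<Rightarrow> ereal"
  assumes lcs: "locally_convex_space TYPE('a)" and closed: "closed_fun g" and convex: "convex_tri g"
    and below: "ereal \<beta> < g x0"
  shows "ereal \<beta> \<le> biconj_tri g x0"
proof -
  obtain f c \<gamma> where f: "f \<in> topdual" and sep: "\<And>x r. g x \<le> ereal r \<Longrightarrow> f x + r * c \<le> \<gamma>"
    and gt: "\<gamma> < f x0 + \<beta> * c"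
    using epigraph_separation[OF lcs closed convex below] by blast
  consider "c > 0" | "c = 0" | "c < 0" by linarith
  then show ?thesis
  proof cases
    case 1
    have "g x = \<infinity>" for x by (rule epigraph_under_upward_hyperplane[of g f c \<gamma>, OF sep 1])
    then have "biconj_tri g x0 = \<infinity>"
      by (intro biconj_tri_infinite[of "\<lambda>x. 0" g "-1"]) (auto simp: topdual_def linear_zero)
    then show ?thesis by simp
  next
    case 2
    have "f x \<le> \<gamma>" if "g x < \<infinity>" for x
      using sep[of x] 2 that by (cases "g x") auto
    then have "biconj_tri g x0 = \<infinity>" using gt 2 by (intro biconj_tri_infinite[OF f]) auto
    then show ?thesis by simp
  next
    case 3
    txt \<open>Normalising the vertical component gives the affine minorant (f - \<gamma>) / |c|.\<close>
    define h where "h = (\<lambda>x. (1 / - c) * f x)"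
    have h: "h \<in> topdual" unfolding h_def by (rule topdual_scale[OF f])
    have "ereal (h x - \<gamma> / - c) \<le> g x" for x
    proof (rule ereal_le_real)
      fix r assume "g x \<le> ereal r"
      then have "f x + r * c \<le> \<gamma>" by (rule sep)
      then show "ereal (h x - \<gamma> / - c) \<le> ereal r" using 3 by (simp add: h_def field_simps)
    qed
    then have "ereal (h x0 - \<gamma> / - c) \<le> biconj_tri g x0" by (rule affine_minorant_le_biconj_tri[OF h])
    moreover have "\<beta> < h x0 - \<gamma> / - c" using gt 3 by (simp add: h_def field_simps)
    ultimately show ?thesis by (simp add: order_trans[rotated])
  qed
qed

theorem mainTheorem12:
  fixes g :: "'a::{real_vector, t2_space} \<Rightarrow> ereal"
  assumes "locally_convex_space TYPE('a)"
    and "closed_fun g"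
    and "convex_tri g"
  shows "biconj_tri g = g"
proof
  fix x0
  show "biconj_tri g x0 = g x0"
  proof (rule antisym)
    show "biconj_tri g x0 \<le> g x0" by (rule biconj_tri_le)
    show "g x0 \<le> biconj_tri g x0"
    proof (rule dense_le)
      fix y assume "y < g x0"
      then show "y \<le> biconj_tri g x0"
      proof (cases y)
        case (real \<beta>)
        then show ?thesis using biconj_tri_above_real[OF assms] \<open>y < g x0\<close> by simp
      qed simp_all
    qed
  qed
qed

end
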